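(* Let $\rho_k:\{1,\dots,\ell\}\times\mathbb{B}^n\to\overline{\mathbb{Q}}$ and let $(\sigma,\pi)$ be a strategy such that $\Psi_\pi(\rho_k)\ge\rho_k$. Let $\rho_{k+1}$ be the least fixed point of $\Psi_\pi$ greater than or equal to $\rho_k$ (original strategy evaluation), and let $\hat\rho$ be the result of the modified strategy evaluation, i.e. the least fixed point of $\hat\Psi_\pi$ greater than or equal to $\hat r_1$, where $\hat r_1(i,[\vec b]_i)=\Psi_\pi(\rho_k)(i,\vec b)$. Then for all $1\le i\le\ell$ and all $\vec b\in\mathbb{B}^n$, $\rho_{k+1}(i,\vec b)=\hat\rho(i,[\vec b]_i)$.
   Context: Setting: a program with rational variables $\vec x\in\mathbb{Q}^m$, Boolean variables $\vec b\in\mathbb{B}^n$ ($\mathbb{B}=\{0,1\}$), and transition relation $\exists\vec y\in\mathbb{Q}^E\,\exists\vec p\in\mathbb{B}^d.\ T$, where $T$ is a quantifier-free formula whose atoms are propositional literals over $\vec b,\vec b',\vec p$ and linear (in)equalities over $\vec x,\vec x',\vec y$, such that for each $\pi\in\mathbb{B}^d$, $T[\pi/\vec p]$ is the conjunction of a propositional formula in $\vec b,\vec b'$ and a conjunction $T_\pi$ of linear constraints in $\vec x,\vec x',\vec y$. Let $A\in\mathbb{Q}^{\ell\times m}$ be a template matrix with rows $A_1,\dots,A_\ell$, and $\overline{\mathbb{Q}}=\mathbb{Q}\cup\{\pm\infty\}$; functions $\{1,\dots,\ell\}\times\mathbb{B}^n\to\overline{\mathbb{Q}}$ are ordered pointwise,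 and $\rho(\vec b)$ denotes the vector $(\rho(1,\vec b),\dots,\rho(\ell,\vec b))$. A strategy assigns to each $(i',\vec b')$ either $\bot$ or a pair $(\sigma(i',\vec b'),\pi(i',\vec b'))\in\mathbb{B}^n\times\mathbb{B}^d$. The operator is $\Psi_\pi(\rho)(i',\vec b')=\sup\{A_{i'}\vec x':\exists\vec x,\vec y.\ T_{\pi(i',\vec b')}\wedge A\vec x\le\rho(\sigma(i',\vec b'))\}$, with value $-\infty$ when the strategy is $\bot$ at $(i',\vec b')$ or the set is empty. For each $i$, define the equivalence $\vec b_1\sim_i\vec b_2$ iff $\pi(i,\vec b_1)=\pi(i,\vec b_2)$ and $\sigma(i,\vec b_1)=\sigma(i,\vec b_2)$, and let $[\vec b]_i$ denote the class of $\vec b$. The modified evaluation works on functions $r$ assigning a value in $\overline{\mathbb{Q}}$ to each pair $(i,C)$ with $C$ a $\sim_i$-class, via $\hat\Psi_\pi(r)(i',[\vec b']_{i'})=\sup\{A_{i'}\vec x':\exists\vec x,\vec y.\ T_{\pi(i',\vec b')}\wedge\bigwedge_{j=1}^\ell A_j\vec x\le r(j,[\sigma(i',\vec b')]_j)\}$ (again $-\infty$ if the strategy is $\bot$), which is well defined since $\pi(i',\cdot),\sigma(i',\cdot)$ are constant on $\sim_{i'}$-classes. *)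

theory Defs
  imports "HOL-Analysis.Analysis"
begin

definition Qbar :: "ereal set" where
  "Qbar = {\<infinity>, -\<infinity>} \<union> {ereal (real_of_rat q) | q. True}"

datatype lin_rel = LeR | LtR | EqR

definition dotq :: "rat ^ 'k \<Rightarrow> rat ^ 'k \<Rightarrow> rat" where
  "dotq a v = (\<Sum>j\<in>UNIV. a $ j * v $ j)"

definition lin_holds ::
  "((rat ^ 'm) \<times> (rat ^ 'm) \<times> (rat ^ 'e) \<times> lin_rel \<times> rat)
    \<Rightarrow> rat ^ 'm \<Rightarrow> rat ^ 'm \<Rightarrow> rat ^ 'e \<Rightarrow> bool" where
  "lin_holds c x x' y = (case c of (a, a', ay, r, k) \<Rightarrow>
     (let v = dotq a x + dotq a' x' + dotq ay y in
      (case r of LeR \<Rightarrow> v \<le> k | LtR \<Rightarrow> v < k | EqR \<Rightarrow> v = k)))"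

definition linear_conj ::
  "(rat ^ 'm \<Rightarrow> rat ^ 'm \<Rightarrow> rat ^ 'e \<Rightarrow> bool) \<Rightarrow> bool" where
  "linear_conj P \<longleftrightarrow> (\<exists>cs. \<forall>x x' y. P x x' y \<longleftrightarrow> (\<forall>c\<in>set cs. lin_holds c x x' y))"

text \<open>Strategy: for row i' and boolean state b', either None (bottom) or Some (sigma, pi).
  The operator Psi_pi.\<close>
definition Psi ::
  "rat ^ 'm ^ 'l \<Rightarrow> (bool ^ 'd \<Rightarrow> rat ^ 'm \<Rightarrow> rat ^ 'm \<Rightarrow> rat ^ 'e \<Rightarrow> bool)
   \<Rightarrow> ('l \<Rightarrow> bool ^ 'n \<Rightarrow> ((bool ^ 'n) \<times> (bool ^ 'd)) option)
   \<Rightarrow> ('l \<Rightarrow> bool ^ 'n \<Rightarrow> ereal) \<Rightarrow> 'l \<Rightarrow> bool ^ 'n \<Rightarrow> ereal" where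
  "Psi A T strat \<rho> i' b' = (case strat i' b' of
      None \<Rightarrow> -\<infinity>
    | Some (s, p) \<Rightarrow>
        Sup {ereal (real_of_rat ((A *v x') $ i')) | x x' y.
               T p x x' y \<and> (\<forall>j. ereal (real_of_rat ((A *v x) $ j)) \<le> \<rho> j s)})"

text \<open>The equivalence class [b]_i (b1 ~_i b2 iff the strategy agrees at (i,b1) and (i,b2)).\<close>
definition cls :: "('l \<Rightarrow> bool ^ 'n \<Rightarrow> ((bool ^ 'n) \<times> (bool ^ 'd)) option) \<Rightarrow> 'l \<Rightarrow> bool ^ 'n
                    \<Rightarrow> (bool ^ 'n) set" where
  "cls strat i b = {b'. strat i b' = strat i b}"

definition hatPsi ::
  "rat ^ 'm ^ 'l \<Rightarrow> (bool ^ 'd \<Rightarrow> rat ^ 'm \<Rightarrow> rat ^ 'm \<Rightarrow> rat ^ 'e \<Rightarrow> bool)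
   \<Rightarrow> ('l \<Rightarrow> bool ^ 'n \<Rightarrow> ((bool ^ 'n) \<times> (bool ^ 'd)) option)
   \<Rightarrow> ('l \<Rightarrow> (bool ^ 'n) set \<Rightarrow> ereal) \<Rightarrow> 'l \<Rightarrow> (bool ^ 'n) set \<Rightarrow> ereal" where
  "hatPsi A T strat r i' C = (case strat i' (SOME b'. b' \<in> C) of
      None \<Rightarrow> -\<infinity>
    | Some (s, p) \<Rightarrow>
        Sup {ereal (real_of_rat ((A *v x') $ i')) | x x' y.
               T p x x' y \<and> (\<forall>j. ereal (real_of_rat ((A *v x) $ j)) \<le> r j (cls strat j s))})"

definition is_lfp_above where
  "is_lfp_above A T strat \<rho>0 \<rho> \<longleftrightarrow>
     (\<forall>i b. \<rho> i b \<in> Qbar) \<and> Psi A T strat \<rho> = \<rho> \<and> \<rho>0 \<le> \<rho> \<and>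
     (\<forall>\<rho>'. (\<forall>i b. \<rho>' i b \<in> Qbar) \<longrightarrow> Psi A T strat \<rho>' = \<rho>' \<longrightarrow> \<rho>0 \<le> \<rho>' \<longrightarrow> \<rho> \<le> \<rho>')"

definition is_hat_lfp_above where
  "is_hat_lfp_above A T strat r0 r \<longleftrightarrow>
     (\<forall>i b. r i (cls strat i b) \<in> Qbar) \<and>
     (\<forall>i b. hatPsi A T strat r i (cls strat i b) = r i (cls strat i b)) \<and>
     (\<forall>i b. r0 i (cls strat i b) \<le> r i (cls strat i b)) \<and>
     (\<forall>r'. (\<forall>i b. r' i (cls strat i b) \<in> Qbar) \<longrightarrow>
           (\<forall>i b. hatPsi A T strat r' i (cls strat i b) = r' i (cls strat i b)) \<longrightarrow>
           (\<forall>i b. r0 i (cls strat i b) \<le> r' i (cls strat i b)) \<longrightarrow>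
           (\<forall>i b. r i (cls strat i b) \<le> r' i (cls strat i b)))"

end

theory Submission
  imports Defs
begin

text \<open>Both evaluations compute the same object: lifting a function on classes to a function on
  states, via the class of each state, turns fixed points of the modified operator into fixed
  points of the original one, and choosing a representative of each class goes back. Both maps
  preserve the lower bounds, so minimality on each side gives the two inequalities. The argument
  is purely order-theoretic.\<close>

definition lift_cls ::
  "('l \<Rightarrow> bool ^ 'n \<Rightarrow> ((bool ^ 'n) \<times> (bool ^ 'd)) option)
   \<Rightarrow> ('l \<Rightarrow> (bool ^ 'n) set \<Rightarrow> ereal) \<Rightarrow> 'l \<Rightarrow> bool ^ 'n \<Rightarrow> ereal" where
  "lift_cls strat r j s = r j (cls strat j s)"

definition proj_cls :: "('l \<Rightarrow> bool ^ 'n \<Rightarrow> ereal) \<Rightarrow> 'l \<Rightarrow> (bool ^ 'n) set \<Rightarrow> ereal" where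
  "proj_cls \<rho> j C = \<rho> j (SOME b. b \<in> C)"

lemma strat_some_cls: "strat i (SOME b'. b' \<in> cls strat i b) = strat i b"
proof -
  have "b \<in> cls strat i b" by (simp add: cls_def)
  hence "(SOME b'. b' \<in> cls strat i b) \<in> cls strat i b" by (rule someI)
  thus ?thesis by (simp add: cls_def)
qed

lemma hatPsi_cls_eq_Psi_lift:
  "hatPsi A T strat r i (cls strat i b) = Psi A T strat (lift_cls strat r) i b"
  unfolding hatPsi_def Psi_def lift_cls_def strat_some_cls ..

lemma Psi_cong: "strat i b = strat i b' \<Longrightarrow> Psi A T strat \<rho> i b = Psi A T strat \<rho> i b'"
  unfolding Psi_def by simp

lemma Psi_mono:
  assumes "\<rho> \<le> \<rho>'"
  shows "Psi A T strat \<rho> \<le> Psi A T strat \<rho>'"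
proof (intro le_funI)
  fix i b
  show "Psi A T strat \<rho> i b \<le> Psi A T strat \<rho>' i b"
  proof (cases "strat i b")
    case None
    thus ?thesis by (simp add: Psi_def)
  next
    case (Some a)
    obtain s p where a: "a = (s, p)" by (cases a)
    have "\<And>j. \<rho> j s \<le> \<rho>' j s" using assms by (simp add: le_fun_def)
    hence "{ereal (real_of_rat ((A *v x') $ i)) | x x' y.
              T p x x' y \<and> (\<forall>j. ereal (real_of_rat ((A *v x) $ j)) \<le> \<rho> j s)}
         \<subseteq> {ereal (real_of_rat ((A *v x') $ i)) | x x' y.
              T p x x' y \<and> (\<forall>j. ereal (real_of_rat ((A *v x) $ j)) \<le> \<rho>' j s)}"
      using order_trans by blast
    thus ?thesis unfolding Psi_def Some a by (simp add: Sup_subset_mono)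
  qed
qed

lemma lift_proj_cls_fixpoint:
  assumes "Psi A T strat \<rho> = \<rho>"
  shows "lift_cls strat (proj_cls \<rho>) = \<rho>"
proof (intro ext)
  fix i b
  have "Psi A T strat \<rho> i (SOME b'. b' \<in> cls strat i b) = Psi A T strat \<rho> i b"
    by (rule Psi_cong) (rule strat_some_cls)
  thus "lift_cls strat (proj_cls \<rho>) i b = \<rho> i b"
    using assms by (simp add: lift_cls_def proj_cls_def)
qed

lemma lfp_le_lift_hat_lfp:
  assumes pre: "\<rho>0 \<le> Psi A T strat \<rho>0"
    and r1: "\<forall>i b. r1 i (cls strat i b) = Psi A T strat \<rho>0 i b"
    and orig: "is_lfp_above A T strat \<rho>0 \<rho>"
    and modif: "is_hat_lfp_above A T strat r1 r"
  shows "\<rho> \<le> lift_cls strat r"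
proof -
  have "Psi A T strat (lift_cls strat r) = lift_cls strat r"
  proof (intro ext)
    fix i b
    show "Psi A T strat (lift_cls strat r) i b = lift_cls strat r i b"
      using modif by (simp add: is_hat_lfp_above_def lift_cls_def hatPsi_cls_eq_Psi_lift[symmetric])
  qed
  moreover have "\<forall>i b. lift_cls strat r i b \<in> Qbar"
    using modif by (simp add: is_hat_lfp_above_def lift_cls_def)
  moreover have "\<rho>0 \<le> lift_cls strat r"
  proof (intro le_funI)
    fix i b
    have "\<rho>0 i b \<le> Psi A T strat \<rho>0 i b" using pre by (simp add: le_fun_def)
    also have "\<dots> = r1 i (cls strat i b)" using r1 by simp
    also have "\<dots> \<le> lift_cls strat r i b"
      using modif by (simp add: is_hat_lfp_above_def lift_cls_def)
    finally show "\<rho>0 i b \<le> lift_cls strat r i b" .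
  qed
  ultimately show ?thesis using orig unfolding is_lfp_above_def by blast
qed

lemma hat_lfp_le_proj_lfp:
  assumes r1: "\<forall>i b. r1 i (cls strat i b) = Psi A T strat \<rho>0 i b"
    and orig: "is_lfp_above A T strat \<rho>0 \<rho>"
    and modif: "is_hat_lfp_above A T strat r1 r"
  shows "r i (cls strat i b) \<le> \<rho> i b"
proof -
  have fix_\<rho>: "Psi A T strat \<rho> = \<rho>" and "\<rho>0 \<le> \<rho>" and Q: "\<forall>i b. \<rho> i b \<in> Qbar"
    using orig by (auto simp: is_lfp_above_def)
  have lift: "lift_cls strat (proj_cls \<rho>) = \<rho>"
    using fix_\<rho> by (rule lift_proj_cls_fixpoint)
  hence proj: "proj_cls \<rho> i (cls strat i b) = \<rho> i b" for i b
    by (metis lift_cls_def)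
  have "\<forall>i b. hatPsi A T strat (proj_cls \<rho>) i (cls strat i b) = proj_cls \<rho> i (cls strat i b)"
    by (simp add: hatPsi_cls_eq_Psi_lift lift fix_\<rho> proj)
  moreover have "\<forall>i b. r1 i (cls strat i b) \<le> proj_cls \<rho> i (cls strat i b)"
    using Psi_mono[OF \<open>\<rho>0 \<le> \<rho>\<close>, of A T strat] r1 fix_\<rho> by (simp add: proj le_fun_def)
  moreover have "\<forall>i b. proj_cls \<rho> i (cls strat i b) \<in> Qbar" using Q by (simp add: proj)
  ultimately have "r i (cls strat i b) \<le> proj_cls \<rho> i (cls strat i b)"
    using modif unfolding is_hat_lfp_above_def by blast
  thus ?thesis by (simp add: proj)
qed

theorem mainTheorem2:
  fixes A :: "rat ^ 'm ^ 'l"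
    and T :: "bool ^ 'd \<Rightarrow> rat ^ 'm \<Rightarrow> rat ^ 'm \<Rightarrow> rat ^ 'e \<Rightarrow> bool"
    and strat :: "'l \<Rightarrow> bool ^ 'n \<Rightarrow> ((bool ^ 'n) \<times> (bool ^ 'd)) option"
    and \<rho>k \<rho>k1 :: "'l \<Rightarrow> bool ^ 'n \<Rightarrow> ereal"
    and r1 \<rho>hat :: "'l \<Rightarrow> (bool ^ 'n) set \<Rightarrow> ereal"
  assumes lin: "\<And>p. linear_conj (T p)"
    and Qk: "\<forall>i b. \<rho>k i b \<in> Qbar"
    and pre: "\<rho>k \<le> Psi A T strat \<rho>k"
    and orig: "is_lfp_above A T strat \<rho>k \<rho>k1"
    and r1: "\<forall>i b. r1 i (cls strat i b) = Psi A T strat \<rho>k i b"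
    and modif: "is_hat_lfp_above A T strat r1 \<rho>hat"
  shows "\<forall>i b. \<rho>k1 i b = \<rho>hat i (cls strat i b)"
proof (intro allI antisym)
  fix i b
  show "\<rho>k1 i b \<le> \<rho>hat i (cls strat i b)"
    using lfp_le_lift_hat_lfp[OF pre r1 orig modif] by (simp add: le_fun_def lift_cls_def)
  show "\<rho>hat i (cls strat i b) \<le> \<rho>k1 i b"
    using hat_lfp_le_proj_lfp[OF r1 orig modif] .
qed

end
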